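(* Let $\pi$ be any distribution on $\mathbb{R}^d$ with positive definite covariance matrix $\Sigma$ and precision matrix $Q=\Sigma^{-1}$, partitioned into blocks $Q=(Q_{ij})_{i,j=1}^s$. Then the optimisation problem $$\max_{p\in\Delta_{s-1}}\lambda_{\min}(D_pQ)$$ has a unique solution $p^{\mathrm{opt}}$.
   Context: $\Delta_{s-1}$ is the set of probability vectors $p=(p_1,\dots,p_s)$ with all $p_i>0$. For such $p$, $D_p=\mathrm{diag}(p_1(Q_{11})^{-1},\dots,p_s(Q_{ss})^{-1})$ is the $d\times d$ block-diagonal matrix with diagonal blocks $p_i(Q_{ii})^{-1}$. $\lambda_{\min}$ denotes the smallest eigenvalue (all eigenvalues of $D_pQ$ are real, as $D_pQ$ has the same eigenvalues as the symmetric matrix $\sqrt{Q}D_p\sqrt{Q}$). The quantity $\lambda_{\min}(D_pQ)$ is called the pseudo-spectral gap of RSGS($p$), and its maximiser the pseudo-optimal selection probabilities. *)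

theory Defs
  imports "HOL-Analysis.Analysis"
begin

definition pos_def_matrix :: "real^'n^'n \<Rightarrow> bool" where
  "pos_def_matrix Q \<longleftrightarrow> transpose Q = Q \<and> (\<forall>x. x \<noteq> 0 \<longrightarrow> x \<bullet> (Q *v x) > 0)"

definition open_simplex :: "('k::finite \<Rightarrow> real) set" where
  "open_simplex = {p. (\<forall>i. p i > 0) \<and> sum p UNIV = 1}"

text \<open>Block-diagonal part diag(Q_11,...,Q_ss) of Q w.r.t. the partition of the
  coordinates given by blk (coordinate a lies in block blk a).\<close>
definition block_diag_part :: "('n \<Rightarrow> 'k) \<Rightarrow> real^'n^'n \<Rightarrow> real^'n^'n" where
  "block_diag_part blk Q = (\<chi> a b. if blk a = blk b then Q $ a $ b else 0)"

text \<open>D_p = diag(p_1 Q_11^{-1}, ..., p_s Q_ss^{-1}); the inverse of a block-diagonal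
  matrix is the block-diagonal matrix of the inverses of its blocks.\<close>
definition D_mat :: "('n \<Rightarrow> 'k) \<Rightarrow> real^'n^'n \<Rightarrow> ('k \<Rightarrow> real) \<Rightarrow> real^'n^'n" where
  "D_mat blk Q p = (\<chi> a b. p (blk a) * (matrix_inv (block_diag_part blk Q)) $ a $ b)"

definition real_eigenvalues :: "real^'n^'n \<Rightarrow> real set" where
  "real_eigenvalues A = {c. \<exists>v. v \<noteq> 0 \<and> A *v v = c *\<^sub>R v}"

definition lambda_min :: "real^'n^'n \<Rightarrow> real" where
  "lambda_min A = Min (real_eigenvalues A)"

end

theory Submission
  imports Defs
begin

(* Let D_p^-1 be the block-diagonal matrix with blocks Q_ii / p_i. Then D_p Q v = c v iff
   Q v = c D_p^-1 v, so lambda_min(D_p Q) is the least eigenvalue of the symmetric-definite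
   pencil (Q, D_p^-1), i.e. the minimum over v of the Rayleigh quotient
   v' Q v / (sum_i a_i(v) / p_i), where a_i(v) >= 0 is the Q-energy of the i-th block of v.
   As a function F of p this is positive, at most every p_i (test a v supported on one
   coordinate), monotone and homogeneous, and since 1 / p_i is affine along harmonic means,
   F at the harmonic mean of p and q is at least min (F p) (F q). The bounds F p <= p_i confine
   near-maximisers to a compact part of the simplex where F is Lipschitz, which gives a
   maximiser; two distinct maximisers would have a harmonic mean of total weight < 1, and its
   rescaling onto the simplex would strictly increase F. *)

section \<open>Symmetric-definite pencils\<close>

lemma symmetric_matrix_inner_commute:
  fixes A :: "real^'n^'n"
  assumes "transpose A = A"
  shows "v \<bullet> (A *v w) = w \<bullet> (A *v v)"
  by (metis assms dot_lmul_matrix inner_commute transpose_matrix_vector)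

lemma symmetric_quadratic_form_add:
  fixes A :: "real^'n^'n"
  assumes "transpose A = A"
  shows "(v + t *\<^sub>R w) \<bullet> (A *v (v + t *\<^sub>R w))
         = v \<bullet> (A *v v) + 2 * t * (w \<bullet> (A *v v)) + t\<^sup>2 * (w \<bullet> (A *v w))"
  using symmetric_matrix_inner_commute[OF assms, of v w]
  by (simp add: matrix_vector_right_distrib matrix_vector_mult_scaleR inner_add_left
      inner_add_right power2_eq_square algebra_simps)

lemma pos_def_matrix_invertible:
  assumes "pos_def_matrix B"
  shows "invertible B"
proof -
  have "x = 0" if "B *v x = 0" for x
    using assms that unfolding pos_def_matrix_def by force
  then show ?thesis
    by (simp add: invertible_left_inverse matrix_left_invertible_ker)
qed

lemma matrix_inv_right:
  assumes "invertible A"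
  shows "A ** matrix_inv A = mat 1"
  using someI_ex[OF assms[unfolded invertible_def]] by (simp add: matrix_inv_def)

lemma nonneg_quadratic_linear_coeff_zero:
  fixes \<alpha> \<beta> :: real
  assumes "\<And>t. 0 \<le> t * \<alpha> + t\<^sup>2 * \<beta>"
  shows "\<alpha> = 0"
proof (rule ccontr)
  assume "\<alpha> \<noteq> 0"
  define K where "K = \<bar>\<beta>\<bar> + 1"
  have "K > 0" "\<beta> - K < 0" by (auto simp: K_def)
  define t where "t = - \<alpha> / K"
  have "t * \<alpha> + t\<^sup>2 * \<beta> = (\<alpha> / K)\<^sup>2 * (\<beta> - K)"
    using \<open>K > 0\<close> by (simp add: t_def field_simps power2_eq_square)
  also have "\<dots> < 0"
    using \<open>\<alpha> \<noteq> 0\<close> \<open>K > 0\<close> \<open>\<beta> - K < 0\<close> by (intro mult_pos_neg) auto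
  finally show False using assms[of t] by simp
qed

definition gen_eigenvalues :: "real^'n^'n \<Rightarrow> real^'n^'n \<Rightarrow> real set" where
  "gen_eigenvalues A B = {c. \<exists>v. v \<noteq> 0 \<and> A *v v = c *\<^sub>R (B *v v)}"

lemma real_eigenvalues_inverse_mult:
  fixes A B M :: "real^'n^'n"
  assumes "B ** M = mat 1"
  shows "real_eigenvalues (M ** A) = gen_eigenvalues A B"
proof -
  have "M ** B = mat 1"
    using assms by (rule matrix_left_right_inverse1)
  have "(M ** A) *v v = c *\<^sub>R v \<longleftrightarrow> A *v v = c *\<^sub>R (B *v v)" for v c
    by (metis \<open>M ** B = mat 1\<close> assms matrix_vector_mul_assoc matrix_vector_mul_lid
        matrix_vector_mult_scaleR)
  then show ?thesis
    by (simp add: real_eigenvalues_def gen_eigenvalues_def)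
qed

definition rayleigh :: "real^'n^'n \<Rightarrow> real^'n^'n \<Rightarrow> real^'n \<Rightarrow> real" where
  "rayleigh A B v = (v \<bullet> (A *v v)) / (v \<bullet> (B *v v))"

locale symmetric_definite_pencil =
  fixes A B :: "real^'n^'n"
  assumes symmetric: "transpose A = A"
    and definite: "pos_def_matrix B"
begin

lemma B_symmetric: "transpose B = B"
  using definite by (simp add: pos_def_matrix_def)

lemma B_form_pos: "v \<noteq> 0 \<Longrightarrow> v \<bullet> (B *v v) > 0"
  using definite by (simp add: pos_def_matrix_def)

lemma rayleigh_scaleR: "c \<noteq> 0 \<Longrightarrow> rayleigh A B (c *\<^sub>R v) = rayleigh A B v"
  by (simp add: rayleigh_def matrix_vector_mult_scaleR)

lemma gen_eigenvalue_is_rayleigh: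
  assumes "v \<noteq> 0" "A *v v = c *\<^sub>R (B *v v)"
  shows "c = rayleigh A B v"
  using B_form_pos[OF assms(1)] by (simp add: rayleigh_def assms(2))

lemma gen_eigenvectors_orthogonal:
  assumes "A *v v = c *\<^sub>R (B *v v)" "A *v w = d *\<^sub>R (B *v w)" "c \<noteq> d"
  shows "v \<bullet> (B *v w) = 0"
proof -
  have "d * (v \<bullet> (B *v w)) = c * (w \<bullet> (B *v v))"
    using symmetric_matrix_inner_commute[OF symmetric, of v w] assms(1,2) by simp
  also have "w \<bullet> (B *v v) = v \<bullet> (B *v w)"
    by (rule symmetric_matrix_inner_commute[OF B_symmetric])
  finally show ?thesis
    using assms(3) by (metis mult_right_cancel)
qed

lemma orthogonal_imp_independent:
  assumes "0 \<notin> S" "\<And>v w. v \<in> S \<Longrightarrow> w \<in> S \<Longrightarrow> v \<noteq> w \<Longrightarrow> v \<bullet> (B *v w) = 0"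
  shows "independent S"
proof
  assume "dependent S"
  then obtain T u w where T: "finite T" "T \<subseteq> S" "(\<Sum>v\<in>T. u v *\<^sub>R v) = 0"
    and w: "w \<in> T" "u w \<noteq> 0"
    unfolding dependent_explicit by auto
  have "0 = (\<Sum>v\<in>T. u v *\<^sub>R v) \<bullet> (B *v w)"
    using T(3) by simp
  also have "\<dots> = (\<Sum>v\<in>T. u v * (v \<bullet> (B *v w)))"
    by (simp add: inner_sum_left)
  also have "\<dots> = u w * (w \<bullet> (B *v w))"
  proof -
    have "v \<bullet> (B *v w) = 0" if "v \<in> T - {w}" for v
      using that T(2) w(1) assms(2) by blast
    then show ?thesis
      by (simp add: sum.remove[OF T(1) w(1)])
  qed
  finally show False
    using w T(2) assms(1) B_form_pos[of w] by auto
qed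

lemma finite_gen_eigenvalues: "finite (gen_eigenvalues A B)"
proof -
  define vec where "vec c = (SOME v. v \<noteq> 0 \<and> A *v v = c *\<^sub>R (B *v v))" for c
  have vec: "vec c \<noteq> 0" "A *v vec c = c *\<^sub>R (B *v vec c)" if "c \<in> gen_eigenvalues A B" for c
    using someI_ex[OF that[unfolded gen_eigenvalues_def mem_Collect_eq]] by (simp_all add: vec_def)
  have "inj_on vec (gen_eigenvalues A B)"
    by (rule inj_onI) (metis vec gen_eigenvalue_is_rayleigh)
  moreover have "independent (vec ` gen_eigenvalues A B)"
    by (rule orthogonal_imp_independent) (auto dest: vec intro: gen_eigenvectors_orthogonal)
  then have "finite (vec ` gen_eigenvalues A B)"
    by (rule finiteI_independent)
  ultimately show ?thesis
    by (rule finite_imageD[rotated])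
qed

lemma rayleigh_attains_min: "\<exists>v. v \<noteq> 0 \<and> (\<forall>w. w \<noteq> 0 \<longrightarrow> rayleigh A B v \<le> rayleigh A B w)"
proof -
  have cont: "continuous_on (sphere 0 1) (rayleigh A B)"
    unfolding rayleigh_def[abs_def]
  proof (intro continuous_intros ballI)
    fix v :: "real^'n"
    assume "v \<in> sphere 0 1"
    then show "v \<bullet> (B *v v) \<noteq> 0"
      using B_form_pos[of v] by (cases "v = 0") auto
  qed
  then obtain v where v: "v \<in> sphere 0 1" "\<And>w. w \<in> sphere 0 1 \<Longrightarrow> rayleigh A B v \<le> rayleigh A B w"
    using continuous_attains_inf[OF compact_sphere _ cont] by force
  have "rayleigh A B v \<le> rayleigh A B w" if "w \<noteq> 0" for w
    using v(2)[of "(1 / norm w) *\<^sub>R w"] that by (simp add: rayleigh_scaleR)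
  moreover have "v \<noteq> 0" using v(1) by auto
  ultimately show ?thesis by blast
qed

text \<open>Moving from \<open>v\<close> along the residual \<open>g = A v - \<mu> B v\<close> changes the numerator minus
  \<open>\<mu>\<close> times the denominator by \<open>2 t |g|\<^sup>2 + O(t\<^sup>2)\<close>, which cannot become negative.\<close>
lemma rayleigh_minimiser_gen_eigenvector:
  assumes "v \<noteq> 0" and min: "\<And>w. w \<noteq> 0 \<Longrightarrow> rayleigh A B v \<le> rayleigh A B w"
  shows "A *v v = rayleigh A B v *\<^sub>R (B *v v)"
proof -
  define \<mu> where "\<mu> = rayleigh A B v"
  have ge: "\<mu> * (w \<bullet> (B *v w)) \<le> w \<bullet> (A *v w)" for w
    using min[of w] B_form_pos[of w] by (cases "w = 0") (auto simp: \<mu>_def rayleigh_def le_divide_eq)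
  have eq: "v \<bullet> (A *v v) = \<mu> * (v \<bullet> (B *v v))"
    using B_form_pos[OF assms(1)] by (simp add: \<mu>_def rayleigh_def)
  define g where "g = A *v v - \<mu> *\<^sub>R (B *v v)"
  have "2 * (g \<bullet> g) = 0"
  proof (rule nonneg_quadratic_linear_coeff_zero)
    fix t
    have "0 \<le> (v + t *\<^sub>R g) \<bullet> (A *v (v + t *\<^sub>R g)) - \<mu> * ((v + t *\<^sub>R g) \<bullet> (B *v (v + t *\<^sub>R g)))"
      using ge by simp
    also have "\<dots> = t * (2 * (g \<bullet> g)) + t\<^sup>2 * (g \<bullet> (A *v g) - \<mu> * (g \<bullet> (B *v g)))"
      unfolding symmetric_quadratic_form_add[OF symmetric] symmetric_quadratic_form_add[OF B_symmetric]
      by (simp add: eq g_def algebra_simps inner_diff_left)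
    finally show "0 \<le> t * (2 * (g \<bullet> g)) + t\<^sup>2 * (g \<bullet> (A *v g) - \<mu> * (g \<bullet> (B *v g)))" .
  qed
  then show ?thesis
    by (simp add: g_def \<mu>_def)
qed

lemma Min_gen_eigenvalues_min_rayleigh:
  "\<exists>v. v \<noteq> 0 \<and> Min (gen_eigenvalues A B) = rayleigh A B v \<and>
       (\<forall>w. w \<noteq> 0 \<longrightarrow> rayleigh A B v \<le> rayleigh A B w)"
proof -
  obtain v where v: "v \<noteq> 0" "\<forall>w. w \<noteq> 0 \<longrightarrow> rayleigh A B v \<le> rayleigh A B w"
    using rayleigh_attains_min by blast
  have "rayleigh A B v \<in> gen_eigenvalues A B"
    using v rayleigh_minimiser_gen_eigenvector unfolding gen_eigenvalues_def by blast
  moreover have "rayleigh A B v \<le> c" if "c \<in> gen_eigenvalues A B" for c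
    using that v(2) gen_eigenvalue_is_rayleigh unfolding gen_eigenvalues_def by blast
  ultimately have "Min (gen_eigenvalues A B) = rayleigh A B v"
    by (intro Min_eqI finite_gen_eigenvalues)
  with v show ?thesis by blast
qed

end

section \<open>Maximising a homogeneous objective over the open simplex\<close>

definition harmonic_mean :: "('k \<Rightarrow> real) \<Rightarrow> ('k \<Rightarrow> real) \<Rightarrow> 'k \<Rightarrow> real" where
  "harmonic_mean p q i = 2 * p i * q i / (p i + q i)"

lemma harmonic_mean_le_arith_mean:
  fixes a b :: real
  assumes "a > 0" "b > 0"
  shows "2 * a * b / (a + b) \<le> (a + b) / 2"
    and "a \<noteq> b \<Longrightarrow> 2 * a * b / (a + b) < (a + b) / 2"
proof -
  have "(a + b) / 2 - 2 * a * b / (a + b) = (a - b)\<^sup>2 / (2 * (a + b))"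
    using assms by (simp add: field_simps power2_eq_square)
  moreover have "0 \<le> (a - b)\<^sup>2 / (2 * (a + b))" "a \<noteq> b \<Longrightarrow> 0 < (a - b)\<^sup>2 / (2 * (a + b))"
    using assms by simp_all
  ultimately show "2 * a * b / (a + b) \<le> (a + b) / 2" "a \<noteq> b \<Longrightarrow> 2 * a * b / (a + b) < (a + b) / 2"
    by linarith+
qed

lemma sum_harmonic_mean_less_one:
  assumes "p \<in> open_simplex" "q \<in> open_simplex" "p \<noteq> q"
  shows "sum (harmonic_mean p q) UNIV < 1"
proof -
  obtain j where "p j \<noteq> q j"
    using assms(3) by auto
  have "\<forall>i. p i > 0" "\<forall>i. q i > 0"
    using assms(1,2) by (auto simp: open_simplex_def)
  then have "sum (harmonic_mean p q) UNIV < (\<Sum>i\<in>UNIV. (p i + q i) / 2)"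
    unfolding harmonic_mean_def using harmonic_mean_le_arith_mean \<open>p j \<noteq> q j\<close>
    by (intro sum_strict_mono_ex1) (auto intro!: exI[of _ j])
  also have "\<dots> = 1"
    using assms(1,2) by (simp add: open_simplex_def sum.distrib flip: sum_divide_distrib)
  finally show ?thesis .
qed

definition simplex_floor :: "real \<Rightarrow> (real^'k::finite) set" where
  "simplex_floor \<delta> = {x. (\<forall>i. \<delta> \<le> x$i) \<and> (\<Sum>i\<in>UNIV. x$i) = 1}"

lemma simplex_floor_open_simplex: "\<delta> > 0 \<Longrightarrow> x \<in> simplex_floor \<delta> \<Longrightarrow> ($) x \<in> open_simplex"
  by (auto simp: simplex_floor_def open_simplex_def intro: less_le_trans)

lemma compact_simplex_floor:
  assumes "\<delta> \<ge> 0"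
  shows "compact (simplex_floor \<delta> :: (real^'k::finite) set)"
proof -
  have "closed (simplex_floor \<delta> :: (real^'k) set)"
    unfolding simplex_floor_def
    by (intro closed_Collect_conj closed_Collect_all closed_Collect_le closed_Collect_eq continuous_intros)
  moreover have "simplex_floor \<delta> \<subseteq> (cbox 0 (\<chi> i. 1) :: (real^'k) set)"
  proof
    fix x :: "real^'k"
    assume x: "x \<in> simplex_floor \<delta>"
    then have "0 \<le> x$i" for i
      using assms by (auto simp: simplex_floor_def intro: order_trans)
    moreover have "x$i \<le> 1" for i
    proof -
      have "x$i \<le> (\<Sum>j\<in>UNIV. x$j)"
        using \<open>\<And>i. 0 \<le> x$i\<close> by (intro member_le_sum) auto
      then show ?thesis
        using x by (simp add: simplex_floor_def)
    qed
    ultimately show "x \<in> cbox 0 (\<chi> i. 1)"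
      by (simp add: mem_box_cart)
  qed
  ultimately show ?thesis
    by (metis bounded_cbox bounded_subset compact_eq_bounded_closed)
qed

locale simplex_objective =
  fixes F :: "('k::finite \<Rightarrow> real) \<Rightarrow> real"
  assumes pos: "\<forall>i. p i > 0 \<Longrightarrow> F p > 0"
    and le_weight: "\<forall>i. p i > 0 \<Longrightarrow> F p \<le> p i"
    and superhomogeneous: "\<lbrakk>\<forall>i. p i > 0; \<forall>i. q i > 0; \<kappa> > 0; \<forall>i. \<kappa> * p i \<le> q i\<rbrakk> \<Longrightarrow> \<kappa> * F p \<le> F q"
    and harmonic_mean_ge_min: "\<lbrakk>\<forall>i. p i > 0; \<forall>i. q i > 0\<rbrakk> \<Longrightarrow> min (F p) (F q) \<le> F (harmonic_mean p q)"
begin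

lemma le_one:
  assumes "p \<in> open_simplex"
  shows "F p \<le> 1"
proof -
  obtain i :: 'k where True by simp
  have "F p \<le> p i"
    using assms by (simp add: open_simplex_def le_weight)
  also have "\<dots> \<le> sum p UNIV"
    using assms by (intro member_le_sum) (auto simp: open_simplex_def less_imp_le)
  finally show ?thesis
    using assms by (simp add: open_simplex_def)
qed

text \<open>Lowering each weight by at most \<open>d\<close> scales weights \<open>\<ge> \<delta>\<close> by at least \<open>1 - d / \<delta>\<close>.\<close>
lemma perturbation_lower_bound:
  assumes p: "p \<in> open_simplex" "\<forall>i. \<delta> \<le> p i" and q: "\<forall>i. q i > 0" "\<forall>i. p i - d \<le> q i"
    and "\<delta> > 0" "d \<ge> 0"
  shows "F p - d / \<delta> \<le> F q"
proof (cases "d < \<delta>")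
  case True
  define \<kappa> where "\<kappa> = 1 - d / \<delta>"
  have "\<kappa> > 0" using True \<open>\<delta> > 0\<close> by (simp add: \<kappa>_def)
  have "\<kappa> * p i \<le> q i" for i
  proof -
    have "d \<le> d * p i / \<delta>"
      using p(2) \<open>\<delta> > 0\<close> \<open>d \<ge> 0\<close> by (simp add: le_divide_eq mult_left_mono)
    moreover have "\<kappa> * p i = p i - d * p i / \<delta>"
      by (simp add: \<kappa>_def algebra_simps)
    ultimately show ?thesis
      using q(2)[rule_format, of i] by linarith
  qed
  then have "\<kappa> * F p \<le> F q"
    using p q \<open>\<kappa> > 0\<close> by (intro superhomogeneous) (auto simp: open_simplex_def)
  moreover have "d / \<delta> * F p \<le> d / \<delta>"
    using le_one[OF p(1)] \<open>\<delta> > 0\<close> \<open>d \<ge> 0\<close> by (intro mult_left_le) auto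
  then have "F p - d / \<delta> \<le> \<kappa> * F p"
    by (simp add: \<kappa>_def left_diff_distrib)
  ultimately show ?thesis by simp
next
  case False
  then have "1 \<le> d / \<delta>"
    using \<open>\<delta> > 0\<close> by (simp add: le_divide_eq)
  then show ?thesis
    using le_one[OF p(1)] pos[OF q(1)] by simp
qed

lemma lipschitz_on_simplex_floor:
  assumes "\<delta> > 0"
  shows "(1 / \<delta>)-lipschitz_on (simplex_floor \<delta>) (\<lambda>x. F (($) x))"
proof -
  have lower: "F (($) x) - dist x y / \<delta> \<le> F (($) y)"
    if "x \<in> simplex_floor \<delta>" "y \<in> simplex_floor \<delta>" for x y :: "real^'k"
  proof (rule perturbation_lower_bound)
    show "\<forall>i. x$i - dist x y \<le> y$i"
    proof
      fix i
      show "x$i - dist x y \<le> y$i"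
        using component_le_norm_cart[of "x - y" i] by (simp add: dist_norm abs_le_iff)
    qed
    show "($) x \<in> open_simplex"
      using simplex_floor_open_simplex[OF assms that(1)] .
    show "\<forall>i. \<delta> \<le> x$i"
      using that(1) by (simp add: simplex_floor_def)
    show "\<forall>i. 0 < y$i"
      using simplex_floor_open_simplex[OF assms that(2)] by (simp add: open_simplex_def)
  qed (simp_all add: assms)
  show ?thesis
  proof (rule lipschitz_onI)
    fix x y :: "real^'k"
    assume "x \<in> simplex_floor \<delta>" "y \<in> simplex_floor \<delta>"
    then show "dist (F (($) x)) (F (($) y)) \<le> 1 / \<delta> * dist x y"
      using lower[of x y] lower[of y x] by (simp add: dist_real_def abs_le_iff dist_commute)
  qed (use assms in simp)
qed

text \<open>Weights below \<open>\<delta> = F u\<close> (\<open>u\<close> uniform) force \<open>F < F u\<close>, so it suffices to maximise over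
  the compact set \<open>simplex_floor \<delta>\<close>.\<close>
lemma exists_max: "\<exists>p. p \<in> open_simplex \<and> (\<forall>q \<in> open_simplex. F q \<le> F p)"
proof -
  define u :: "'k \<Rightarrow> real" where "u = (\<lambda>i. 1 / real CARD('k))"
  have u: "u \<in> open_simplex" "\<forall>i. u i > 0"
    by (simp_all add: open_simplex_def u_def)
  define \<delta> where "\<delta> = F u"
  have "\<delta> > 0" using pos[OF u(2)] by (simp add: \<delta>_def)
  have uK: "(\<chi> i. u i) \<in> simplex_floor \<delta>"
    using le_weight[OF u(2)] u(1) by (simp add: simplex_floor_def open_simplex_def \<delta>_def vec_lambda_inverse)
  obtain x where x: "x \<in> simplex_floor \<delta>" "\<And>y. y \<in> simplex_floor \<delta> \<Longrightarrow> F (($) y) \<le> F (($) x)"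
    using continuous_attains_sup[OF compact_simplex_floor _ lipschitz_on_continuous_on]
      lipschitz_on_simplex_floor \<open>\<delta> > 0\<close> uK
    by (metis empty_iff less_imp_le)
  have "F q \<le> F (($) x)" if "q \<in> open_simplex" for q
  proof (cases "\<forall>i. \<delta> \<le> q i")
    case True
    then show ?thesis
      using x(2)[of "\<chi> i. q i"] that by (simp add: simplex_floor_def open_simplex_def vec_lambda_inverse)
  next
    case False
    then obtain i where "q i < \<delta>" by (auto simp: not_le)
    then have "F q < \<delta>"
      using le_weight[of q i] that by (simp add: open_simplex_def)
    also have "\<delta> \<le> F (($) x)"
      using x(2)[OF uK] by (simp add: \<delta>_def vec_lambda_inverse)
    finally show ?thesis by simp
  qed
  then show ?thesis
    using simplex_floor_open_simplex[OF \<open>\<delta> > 0\<close> x(1)] by blast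
qed

text \<open>Two maximisers would have a harmonic mean of total weight \<open>S < 1\<close> at which \<open>F\<close> is still
  maximal; rescaling it onto the simplex multiplies \<open>F\<close> by at least \<open>1 / S > 1\<close>.\<close>
lemma unique_max:
  assumes p: "p \<in> open_simplex" "\<forall>r \<in> open_simplex. F r \<le> F p"
    and q: "q \<in> open_simplex" "\<forall>r \<in> open_simplex. F r \<le> F q"
  shows "p = q"
proof (rule ccontr)
  assume "p \<noteq> q"
  have ppos: "\<forall>i. p i > 0" and qpos: "\<forall>i. q i > 0"
    using p(1) q(1) by (auto simp: open_simplex_def)
  define h where "h = harmonic_mean p q"
  have hpos: "\<forall>i. h i > 0"
    using ppos qpos by (simp add: h_def harmonic_mean_def add_pos_pos)
  have "F p = F q"
    using p q by (meson order_antisym)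
  then have "F p \<le> F h"
    using harmonic_mean_ge_min[OF ppos qpos] by (simp add: h_def)
  define S where "S = sum h UNIV"
  have "S < 1"
    using sum_harmonic_mean_less_one[OF p(1) q(1) \<open>p \<noteq> q\<close>] by (simp add: S_def h_def)
  have "S > 0"
    unfolding S_def using hpos by (simp add: sum_pos)
  define r where "r i = h i / S" for i
  have "r \<in> open_simplex"
    using hpos \<open>S > 0\<close> by (simp add: open_simplex_def r_def S_def flip: sum_divide_distrib)
  have "F p < F p / S"
    using pos[OF ppos] \<open>S > 0\<close> \<open>S < 1\<close> by (simp add: less_divide_eq)
  also have "\<dots> \<le> F h / S"
    using \<open>F p \<le> F h\<close> \<open>S > 0\<close> by (simp add: divide_right_mono)
  also have "\<dots> \<le> F r"
    using superhomogeneous[OF hpos, of r "1 / S"] \<open>S > 0\<close> hpos by (simp add: r_def)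
  finally show False
    using p(2) \<open>r \<in> open_simplex\<close> by (simp add: not_le[symmetric])
qed

theorem unique_maximiser: "\<exists>!p. p \<in> open_simplex \<and> (\<forall>q \<in> open_simplex. F q \<le> F p)"
  using exists_max unique_max by blast

end

section \<open>The pseudo-spectral gap\<close>

locale block_partition =
  fixes Q :: "real^'n^'n" and blk :: "'n \<Rightarrow> 'k::finite"
  assumes Q_pos_def: "pos_def_matrix Q"
begin

definition block_restrict :: "'k \<Rightarrow> real^'n \<Rightarrow> real^'n" where
  "block_restrict i v = (\<chi> a. if blk a = i then v$a else 0)"

definition block_energy :: "'k \<Rightarrow> real^'n \<Rightarrow> real" where
  "block_energy i v = block_restrict i v \<bullet> (Q *v block_restrict i v)"

definition D_mat_inverse :: "('k \<Rightarrow> real) \<Rightarrow> real^'n^'n" where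
  "D_mat_inverse p = (\<chi> a b. if blk a = blk b then Q$a$b / p (blk a) else 0)"

lemma Q_form_pos: "x \<noteq> 0 \<Longrightarrow> x \<bullet> (Q *v x) > 0"
  using Q_pos_def by (simp add: pos_def_matrix_def)

lemma Q_form_nonneg: "x \<bullet> (Q *v x) \<ge> 0"
  using Q_form_pos[of x] by (cases "x = 0") auto

lemma block_energy_nonneg: "block_energy i v \<ge> 0"
  by (simp add: block_energy_def Q_form_nonneg)

lemma block_energy_pos:
  assumes "v$a \<noteq> 0"
  shows "block_energy (blk a) v > 0"
proof -
  have "block_restrict (blk a) v $ a \<noteq> 0"
    using assms by (simp add: block_restrict_def)
  then have "block_restrict (blk a) v \<noteq> 0"
    by auto
  then show ?thesis
    by (simp add: block_energy_def Q_form_pos)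
qed

lemma inner_block_restrict: "block_restrict i v \<bullet> w = v \<bullet> block_restrict i w"
  by (auto simp: block_restrict_def inner_vec_def intro!: sum.cong)

lemma D_mat_inverse_mult_vec:
  "D_mat_inverse p *v v = (\<Sum>i\<in>UNIV. (1 / p i) *\<^sub>R block_restrict i (Q *v block_restrict i v))"
proof -
  have "(D_mat_inverse p *v v)$a = (\<Sum>i\<in>UNIV. (1 / p i) * block_restrict i (Q *v block_restrict i v) $ a)"
    for a
  proof -
    have "(D_mat_inverse p *v v)$a = (Q *v block_restrict (blk a) v)$a / p (blk a)"
      by (auto simp: D_mat_inverse_def block_restrict_def matrix_vector_mult_def sum_divide_distrib
          intro!: sum.cong)
    also have "\<dots> = (\<Sum>i\<in>UNIV. (1 / p i) * block_restrict i (Q *v block_restrict i v) $ a)"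
      by (simp add: block_restrict_def if_distrib[of "(*) _"] cong: if_cong)
    finally show ?thesis .
  qed
  then show ?thesis
    by (simp add: vec_eq_iff sum_component)
qed

lemma D_mat_inverse_form: "v \<bullet> (D_mat_inverse p *v v) = (\<Sum>i\<in>UNIV. block_energy i v / p i)"
  by (simp add: D_mat_inverse_mult_vec inner_sum_right block_energy_def inner_block_restrict)

lemma Q_symmetric: "transpose Q = Q"
  using Q_pos_def by (simp add: pos_def_matrix_def)

lemma D_mat_inverse_symmetric: "transpose (D_mat_inverse p) = D_mat_inverse p"
  using Q_symmetric by (auto simp: D_mat_inverse_def transpose_def vec_eq_iff)

lemma D_mat_inverse_pos_def:
  assumes "\<forall>i. p i > 0"
  shows "pos_def_matrix (D_mat_inverse p)"
  unfolding pos_def_matrix_def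
proof (intro conjI allI impI D_mat_inverse_symmetric)
  fix v :: "real^'n"
  assume "v \<noteq> 0"
  then obtain a where "v$a \<noteq> 0" by (auto simp: vec_eq_iff)
  then show "v \<bullet> (D_mat_inverse p *v v) > 0"
    unfolding D_mat_inverse_form using assms block_energy_pos block_energy_nonneg
    by (intro sum_pos2[of _ "blk a"]) (auto intro: divide_nonneg_pos)
qed

lemma block_diag_part_eq: "block_diag_part blk Q = D_mat_inverse (\<lambda>_. 1)"
  by (simp add: vec_eq_iff block_diag_part_def D_mat_inverse_def)

lemma D_mat_inverse_mult_D_mat:
  assumes "\<forall>i. p i > 0"
  shows "D_mat_inverse p ** D_mat blk Q p = mat 1"
proof -
  have "p i \<noteq> 0" for i
    using assms by (metis less_irrefl)
  then have "D_mat_inverse p ** D_mat blk Q p = block_diag_part blk Q ** matrix_inv (block_diag_part blk Q)"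
    by (auto simp: vec_eq_iff matrix_matrix_mult_def D_mat_def D_mat_inverse_def
        block_diag_part_def intro!: sum.cong)
  also have "\<dots> = mat 1"
    using D_mat_inverse_pos_def[of "\<lambda>_. 1"]
    by (simp add: block_diag_part_eq matrix_inv_right pos_def_matrix_invertible)
  finally show ?thesis .
qed

definition pseudo_gap :: "('k \<Rightarrow> real) \<Rightarrow> real" where
  "pseudo_gap p = lambda_min (D_mat blk Q p ** Q)"

lemma pseudo_gap_eq_Min_gen_eigenvalues:
  assumes "\<forall>i. p i > 0"
  shows "pseudo_gap p = Min (gen_eigenvalues Q (D_mat_inverse p))"
  unfolding pseudo_gap_def lambda_min_def
  using real_eigenvalues_inverse_mult[OF D_mat_inverse_mult_D_mat[OF assms]] by simp

lemma pseudo_gap_min_rayleigh: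
  assumes "\<forall>i. p i > 0"
  shows "\<exists>v. v \<noteq> 0 \<and> pseudo_gap p = rayleigh Q (D_mat_inverse p) v \<and>
           (\<forall>w. w \<noteq> 0 \<longrightarrow> pseudo_gap p \<le> rayleigh Q (D_mat_inverse p) w)"
proof -
  interpret symmetric_definite_pencil Q "D_mat_inverse p"
    using Q_symmetric D_mat_inverse_pos_def[OF assms] by unfold_locales
  obtain v where "v \<noteq> 0" "Min (gen_eigenvalues Q (D_mat_inverse p)) = rayleigh Q (D_mat_inverse p) v"
    and "\<forall>w. w \<noteq> 0 \<longrightarrow> rayleigh Q (D_mat_inverse p) v \<le> rayleigh Q (D_mat_inverse p) w"
    using Min_gen_eigenvalues_min_rayleigh by blast
  then show ?thesis
    unfolding pseudo_gap_eq_Min_gen_eigenvalues[OF assms] by auto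
qed

lemma pseudo_gap_attained:
  assumes "\<forall>i. p i > 0"
  shows "\<exists>v. v \<noteq> 0 \<and> pseudo_gap p = rayleigh Q (D_mat_inverse p) v"
  using pseudo_gap_min_rayleigh[OF assms] by blast

lemma rayleigh_D_mat_inverse:
  "rayleigh Q (D_mat_inverse p) v = (v \<bullet> (Q *v v)) / (\<Sum>i\<in>UNIV. block_energy i v / p i)"
  by (simp add: rayleigh_def D_mat_inverse_form)

lemma sum_block_energy_pos:
  assumes "\<forall>i. p i > 0" "v \<noteq> 0"
  shows "(\<Sum>i\<in>UNIV. block_energy i v / p i) > 0"
  using D_mat_inverse_pos_def[OF assms(1)] assms(2)
  by (simp add: pos_def_matrix_def D_mat_inverse_form)

lemma pseudo_gap_le_rayleigh:
  assumes "\<forall>i. p i > 0" "w \<noteq> 0"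
  shows "pseudo_gap p \<le> rayleigh Q (D_mat_inverse p) w"
  using pseudo_gap_min_rayleigh[OF assms(1)] assms(2) by blast

lemma pseudo_gap_mult_le:
  assumes "\<forall>i. p i > 0"
  shows "pseudo_gap p * (\<Sum>i\<in>UNIV. block_energy i v / p i) \<le> v \<bullet> (Q *v v)"
proof (cases "v = 0")
  case True
  have "block_restrict i 0 = 0" for i
    by (simp add: block_restrict_def vec_eq_iff)
  with True show ?thesis
    by (simp add: block_energy_def)
next
  case False
  then show ?thesis
    using pseudo_gap_le_rayleigh[OF assms False] sum_block_energy_pos[OF assms False]
    by (simp add: rayleigh_D_mat_inverse le_divide_eq)
qed

lemma pseudo_gap_pos:
  assumes "\<forall>i. p i > 0"
  shows "pseudo_gap p > 0"
proof -
  obtain v where v: "v \<noteq> 0" "pseudo_gap p = rayleigh Q (D_mat_inverse p) v"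
    using pseudo_gap_attained[OF assms] by blast
  with v Q_form_pos[OF v(1)] sum_block_energy_pos[OF assms v(1)] show ?thesis
    by (simp add: rayleigh_D_mat_inverse)
qed

lemma pseudo_gap_le_weight:
  assumes "\<forall>i. p i > 0" and "blk a = i"
  shows "pseudo_gap p \<le> p i"
proof -
  have diag: "axis a 1 \<bullet> (M *v axis a 1) = M$a$a" for M :: "real^'n^'n"
    by (simp add: inner_commute[of "axis a 1"] inner_axis matrix_vector_mult_basis column_def)
  have "axis a (1::real) \<noteq> 0"
    by simp
  then have "Q$a$a > 0"
    using Q_form_pos diag by metis
  have "rayleigh Q (D_mat_inverse p) (axis a 1) = Q$a$a / (Q$a$a / p i)"
    unfolding rayleigh_def diag by (simp add: D_mat_inverse_def assms(2))
  also have "\<dots> = p i"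
    using \<open>Q$a$a > 0\<close> by simp
  finally show ?thesis
    using pseudo_gap_le_rayleigh[OF assms(1) \<open>axis a 1 \<noteq> 0\<close>] by simp
qed

lemma pseudo_gap_greatest:
  assumes "\<forall>i. p i > 0"
    and "\<And>v. v \<noteq> 0 \<Longrightarrow> c * (\<Sum>i\<in>UNIV. block_energy i v / p i) \<le> v \<bullet> (Q *v v)"
  shows "c \<le> pseudo_gap p"
proof -
  obtain v where v: "v \<noteq> 0" "pseudo_gap p = rayleigh Q (D_mat_inverse p) v"
    using pseudo_gap_attained[OF assms(1)] by blast
  then show ?thesis
    using assms(2)[OF v(1)] sum_block_energy_pos[OF assms(1) v(1)]
    by (simp add: rayleigh_D_mat_inverse le_divide_eq)
qed

lemma pseudo_gap_superhomogeneous: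
  assumes "\<forall>i. p i > 0" "\<forall>i. q i > 0" "\<kappa> > 0" "\<forall>i. \<kappa> * p i \<le> q i"
  shows "\<kappa> * pseudo_gap p \<le> pseudo_gap q"
proof (rule pseudo_gap_greatest[OF assms(2)])
  fix v :: "real^'n"
  have "\<kappa> * (\<Sum>i\<in>UNIV. block_energy i v / q i) \<le> (\<Sum>i\<in>UNIV. block_energy i v / p i)"
    unfolding sum_distrib_left
  proof (rule sum_mono)
    fix i
    have "p i \<le> q i / \<kappa>" "0 < q i / \<kappa> * p i"
      using assms by (simp_all add: le_divide_eq mult.commute)
    then have "block_energy i v / (q i / \<kappa>) \<le> block_energy i v / p i"
      using block_energy_nonneg by (intro divide_left_mono)
    then show "\<kappa> * (block_energy i v / q i) \<le> block_energy i v / p i"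
      by (simp add: mult.commute)
  qed
  then have "pseudo_gap p * (\<kappa> * (\<Sum>i\<in>UNIV. block_energy i v / q i))
      \<le> pseudo_gap p * (\<Sum>i\<in>UNIV. block_energy i v / p i)"
    using pseudo_gap_pos[OF assms(1)] by (intro mult_left_mono) auto
  also have "\<dots> \<le> v \<bullet> (Q *v v)"
    by (rule pseudo_gap_mult_le[OF assms(1)])
  finally show "\<kappa> * pseudo_gap p * (\<Sum>i\<in>UNIV. block_energy i v / q i) \<le> v \<bullet> (Q *v v)"
    by (simp add: mult_ac)
qed

lemma pseudo_gap_harmonic_mean:
  assumes "\<forall>i. p i > 0" "\<forall>i. q i > 0"
  shows "min (pseudo_gap p) (pseudo_gap q) \<le> pseudo_gap (harmonic_mean p q)"
proof (rule pseudo_gap_greatest)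
  show "\<forall>i. harmonic_mean p q i > 0"
    using assms by (simp add: harmonic_mean_def add_pos_pos)
  fix v :: "real^'n"
  assume "v \<noteq> 0"
  define m where "m = min (pseudo_gap p) (pseudo_gap q)"
  have "m * (\<Sum>i\<in>UNIV. block_energy i v / p i) \<le> v \<bullet> (Q *v v)"
    using sum_block_energy_pos[OF assms(1) \<open>v \<noteq> 0\<close>]
    by (intro order_trans[OF _ pseudo_gap_mult_le[OF assms(1)]] mult_right_mono) (simp_all add: m_def)
  moreover have "m * (\<Sum>i\<in>UNIV. block_energy i v / q i) \<le> v \<bullet> (Q *v v)"
    using sum_block_energy_pos[OF assms(2) \<open>v \<noteq> 0\<close>]
    by (intro order_trans[OF _ pseudo_gap_mult_le[OF assms(2)]] mult_right_mono) (simp_all add: m_def)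
  moreover have "(\<Sum>i\<in>UNIV. block_energy i v / harmonic_mean p q i)
      = (\<Sum>i\<in>UNIV. (block_energy i v / p i + block_energy i v / q i) / 2)"
  proof (rule sum.cong)
    fix i
    have "p i > 0" "q i > 0"
      using assms by auto
    then show "block_energy i v / harmonic_mean p q i
        = (block_energy i v / p i + block_energy i v / q i) / 2"
      by (simp add: harmonic_mean_def field_simps)
  qed simp
  then have "(\<Sum>i\<in>UNIV. block_energy i v / harmonic_mean p q i)
      = ((\<Sum>i\<in>UNIV. block_energy i v / p i) + (\<Sum>i\<in>UNIV. block_energy i v / q i)) / 2"
    by (simp add: sum.distrib flip: sum_divide_distrib)
  ultimately show "m * (\<Sum>i\<in>UNIV. block_energy i v / harmonic_mean p q i) \<le> v \<bullet> (Q *v v)"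
    by (simp add: distrib_left add_divide_distrib)
qed

end

theorem theorem3:
  fixes Q :: "real^'n^'n" and blk :: "'n \<Rightarrow> 'k::finite"
  assumes "pos_def_matrix Q"
    and "surj blk"
  shows "\<exists>!p. p \<in> open_simplex \<and>
           (\<forall>q \<in> open_simplex. lambda_min (D_mat blk Q q ** Q) \<le> lambda_min (D_mat blk Q p ** Q))"
proof -
  interpret block_partition Q blk
    using assms(1) by unfold_locales
  interpret simplex_objective pseudo_gap
  proof
    fix p :: "'k \<Rightarrow> real" and i
    assume "\<forall>i. p i > 0"
    then show "pseudo_gap p \<le> p i"
      using pseudo_gap_le_weight assms(2) by (metis surjD)
  qed (simp_all add: pseudo_gap_pos pseudo_gap_superhomogeneous pseudo_gap_harmonic_mean)
  show ?thesis
    using unique_maximiser by (simp add: pseudo_gap_def)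
qed

end
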